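(* Let $R$ be a (unital, not necessarily associative) ring, let $\sigma\colon R\to R$ be an additive surjection with $\sigma(1)=1$, and let $\delta\colon R\to R$ be an additive map with $\delta(1)=0$. If $R$ is right Noetherian, then the non-associative Ore extension $R[X;\sigma,\delta]$ is right Noetherian.
   Context: A right ideal of a non-associative ring $S$ is an additive subgroup $I$ with $Is\subseteq I$ for all $s\in S$; $S$ is right Noetherian if it satisfies the ascending chain condition on right ideals. For a non-associative ring $R$ and additive maps $\sigma,\delta\colon R\to R$ with $\sigma(1)=1$, $\delta(1)=0$, the non-associative Ore extension $R[X;\sigma,\delta]$ is the additive group of formal sums $\sum_{i\in\mathbb{N}} r_iX^i$ ($r_i\in R$, finitely many non-zero) with pointwise addition and multiplication the biadditive extension of $(rX^m)(sX^n)=\sum_{i\in\mathbb{N}}(r\pi_i^m(s))X^{i+n}$ for $r,s\in R$, $m,n\in\mathbb{N}$, where $\pi_i^m$ is the sum of all $\binom{m}{i}$ compositions of $i$ copies of $\sigma$ and $m-i$ copies of $\delta$, and $\pi_i^m=0$ if $i>m$. *)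

theory Defs
  imports "HOL-Computational_Algebra.Polynomial"
begin

definition nonassoc_ring_1 :: "('a::ab_group_add \<Rightarrow> 'a \<Rightarrow> 'a) \<Rightarrow> 'a \<Rightarrow> bool" where
  "nonassoc_ring_1 mul one \<longleftrightarrow>
     (\<forall>a b c. mul (a + b) c = mul a c + mul b c) \<and>
     (\<forall>a b c. mul a (b + c) = mul a b + mul a c) \<and>
     (\<forall>a. mul one a = a) \<and> (\<forall>a. mul a one = a)"

definition additive_map :: "('a::ab_group_add \<Rightarrow> 'b::ab_group_add) \<Rightarrow> bool" where
  "additive_map f \<longleftrightarrow> (\<forall>x y. f (x + y) = f x + f y)"

definition right_ideal :: "('a::ab_group_add \<Rightarrow> 'a \<Rightarrow> 'a) \<Rightarrow> 'a set \<Rightarrow> bool" where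
  "right_ideal mul I \<longleftrightarrow>
     0 \<in> I \<and> (\<forall>x\<in>I. \<forall>y\<in>I. x - y \<in> I) \<and> (\<forall>x\<in>I. \<forall>s. mul x s \<in> I)"

definition right_noetherian :: "('a::ab_group_add \<Rightarrow> 'a \<Rightarrow> 'a) \<Rightarrow> bool" where
  "right_noetherian mul \<longleftrightarrow>
     (\<forall>I :: nat \<Rightarrow> 'a set. (\<forall>n. right_ideal mul (I n)) \<and> (\<forall>n. I n \<subseteq> I (Suc n))
        \<longrightarrow> (\<exists>N. \<forall>n\<ge>N. I n = I N))"

text \<open>The composition determined by a word of length m in sigma and delta, the word
  being encoded by the set S of positions (< m) carrying sigma; position k is applied
  after positions < k.\<close>
fun word_comp :: "('a \<Rightarrow> 'a) \<Rightarrow> ('a \<Rightarrow> 'a) \<Rightarrow> nat set \<Rightarrow> nat \<Rightarrow> 'a \<Rightarrow> 'a" where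
  "word_comp \<sigma> \<delta> S 0 = id"
| "word_comp \<sigma> \<delta> S (Suc k) = (if k \<in> S then \<sigma> else \<delta>) \<circ> word_comp \<sigma> \<delta> S k"

text \<open>pi_i^m: sum of all (m choose i) compositions of i copies of sigma and m-i copies
  of delta (zero if i > m, as the index set is then empty).\<close>
definition ore_pi :: "('a::ab_group_add \<Rightarrow> 'a) \<Rightarrow> ('a \<Rightarrow> 'a) \<Rightarrow> nat \<Rightarrow> nat \<Rightarrow> 'a \<Rightarrow> 'a" where
  "ore_pi \<sigma> \<delta> i m x = (\<Sum>S\<in>{S. S \<subseteq> {..<m} \<and> card S = i}. word_comp \<sigma> \<delta> S m x)"

text \<open>Multiplication of R[X;sigma,delta] on 'a poly (formal sums sum r_i X^i):
  biadditive extension of (r X^m)(s X^n) = sum_i (r pi_i^m(s)) X^(i+n).\<close>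
definition ore_mul :: "('a::ab_group_add \<Rightarrow> 'a \<Rightarrow> 'a) \<Rightarrow> ('a \<Rightarrow> 'a) \<Rightarrow> ('a \<Rightarrow> 'a)
    \<Rightarrow> 'a poly \<Rightarrow> 'a poly \<Rightarrow> 'a poly" where
  "ore_mul mul \<sigma> \<delta> p q =
     (\<Sum>m\<le>degree p. \<Sum>n\<le>degree q. \<Sum>i\<le>m.
        monom (mul (coeff p m) (ore_pi \<sigma> \<delta> i m (coeff q n))) (i + n))"

end

theory Submission
  imports Defs
begin

text \<open>The argument of Hilbert's basis theorem. For a right ideal \<open>I\<close> of \<open>R[X;\<sigma>,\<delta>]\<close> let
  \<open>L\<^sub>n(I)\<close> be the set of \<open>n\<close>-th coefficients of the elements of \<open>I\<close> of degree at most \<open>n\<close>.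
  The top coefficient of \<open>f t\<close> for a constant \<open>t\<close> is \<open>f\<^sub>n \<sigma>\<^sup>n(t)\<close> and \<open>\<sigma>\<^sup>n\<close> is onto, so
  \<open>L\<^sub>n(I)\<close> is a right ideal of \<open>R\<close>; multiplying by \<open>X\<close> gives \<open>L\<^sub>n(I) \<subseteq> L\<^sub>n\<^sub>+\<^sub>1(I)\<close>.
  Nested ideals with the same \<open>L\<^sub>n\<close> for all \<open>n\<close> coincide (cancel top coefficients and descend on
  the degree). For an ascending chain \<open>I\<^sub>k\<close> the family \<open>L\<^sub>n(I\<^sub>k)\<close> is monotone in both indices;
  the chain condition of \<open>R\<close>, applied to its diagonal and to each of the finitely many rows below
  the point where the diagonal is constant, makes it constant in \<open>k\<close> uniformly in \<open>n\<close>.\<close>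

lemma word_comp_zero:
  assumes "\<sigma> 0 = 0" "\<delta> 0 = 0"
  shows "word_comp \<sigma> \<delta> S m 0 = 0"
  by (induction m) (simp_all add: assms)

lemma word_comp_eq_funpow:
  "{..<m} \<subseteq> S \<Longrightarrow> word_comp \<sigma> \<delta> S m = \<sigma> ^^ m"
  by (induction m) (simp_all add: lessThan_Suc)

lemma ore_pi_diag: "ore_pi \<sigma> \<delta> m m x = (\<sigma> ^^ m) x"
proof -
  have "S = {..<m}" if "S \<subseteq> {..<m}" "card S = m" for S
    using card_subset_eq[of "{..<m}" S] that by simp
  then have "{S. S \<subseteq> {..<m} \<and> card S = m} = {{..<m}}"
    by auto
  then show ?thesis
    by (simp add: ore_pi_def word_comp_eq_funpow)
qed

lemma sum_atMost_only_top_term: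
  fixes F :: "nat \<Rightarrow> nat \<Rightarrow> nat \<Rightarrow> 'a::comm_monoid_add"
  shows "(\<Sum>m\<le>A. \<Sum>n\<le>B. \<Sum>i\<le>m. if i + n = A + B then F m n i else 0) = F A B A"
proof -
  have "(\<Sum>i\<le>m. if i + n = A + B then F m n i else 0) = (if m = A \<and> n = B then F A B A else 0)"
    if "m \<le> A" "n \<le> B" for m n
  proof (cases "m = A \<and> n = B")
    case False
    with that show ?thesis by (auto intro!: sum.neutral)
  qed simp
  then have "(\<Sum>m\<le>A. \<Sum>n\<le>B. \<Sum>i\<le>m. if i + n = A + B then F m n i else 0) =
      (\<Sum>m\<le>A. \<Sum>n\<le>B. if m = A \<and> n = B then F A B A else 0)"
    by (intro sum.cong refl) simp
  also have "\<dots> = F A B A"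
    by (simp add: sum.cartesian_product sum.delta' flip: prod.inject)
  finally show ?thesis .
qed

lemma additive_map_zero: "additive_map f \<Longrightarrow> f 0 = 0"
  unfolding additive_map_def by (metis add_cancel_right_right)

lemma right_ideal_zero: "right_ideal mul I \<Longrightarrow> 0 \<in> I"
  by (simp add: right_ideal_def)

lemma right_ideal_diff: "right_ideal mul I \<Longrightarrow> x \<in> I \<Longrightarrow> y \<in> I \<Longrightarrow> x - y \<in> I"
  by (simp add: right_ideal_def)

lemma right_ideal_add:
  assumes "right_ideal mul I" "x \<in> I" "y \<in> I"
  shows "x + y \<in> I"
proof -
  have "0 - y \<in> I"
    using right_ideal_diff[OF assms(1) right_ideal_zero[OF assms(1)] assms(3)] .
  then show ?thesis
    using right_ideal_diff[OF assms(1) assms(2)] by fastforce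
qed

lemma right_ideal_mul: "right_ideal mul I \<Longrightarrow> x \<in> I \<Longrightarrow> mul x s \<in> I"
  by (simp add: right_ideal_def)

lemma right_noetherianD:
  assumes "right_noetherian mul" "\<And>n. right_ideal mul (C n)" "\<And>n. C n \<subseteq> C (Suc n)"
  shows "\<exists>N. \<forall>n\<ge>N. C n = C N"
  using assms unfolding right_noetherian_def by blast

definition lead_coeffs :: "nat \<Rightarrow> 'a::zero poly set \<Rightarrow> 'a set" where
  "lead_coeffs n I = {coeff f n | f. f \<in> I \<and> degree f \<le> n}"

lemma lead_coeffs_mono: "I \<subseteq> J \<Longrightarrow> lead_coeffs n I \<subseteq> lead_coeffs n J"
  unfolding lead_coeffs_def by blast

lemma right_ideal_eq_if_lead_coeffs_subset:
  fixes T :: "'a::ab_group_add poly \<Rightarrow> 'a poly \<Rightarrow> 'a poly"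
  assumes I: "right_ideal T I" and J: "right_ideal T J" and "I \<subseteq> J"
    and lead: "\<And>n. lead_coeffs n J \<subseteq> lead_coeffs n I"
  shows "I = J"
proof -
  have "f \<in> I" if "f \<in> J" for f
    using that
  proof (induction "degree f" arbitrary: f rule: less_induct)
    case less
    obtain g where g: "g \<in> I" "degree g \<le> degree f" "coeff g (degree f) = coeff f (degree f)"
      using lead[of "degree f"] less.prems unfolding lead_coeffs_def by fastforce
    have "f - g \<in> J"
      using right_ideal_diff[OF J less.prems] g(1) \<open>I \<subseteq> J\<close> by blast
    moreover have "f - g = 0 \<or> degree (f - g) < degree f"
      using g by (intro eq_zero_or_degree_less) (simp_all add: degree_diff_le)
    ultimately have "f - g \<in> I"
      using less.hyps right_ideal_zero[OF I] by auto
    then show "f \<in> I"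
      using right_ideal_add[OF I _ g(1)] by fastforce
  qed
  with \<open>I \<subseteq> J\<close> show ?thesis by blast
qed

lemma doubly_monotone_stabilizes:
  fixes L :: "nat \<Rightarrow> nat \<Rightarrow> 'a set"
  assumes acc: "\<And>C. (\<And>n. P (C n)) \<Longrightarrow> (\<And>n. C n \<subseteq> C (Suc n)) \<Longrightarrow> \<exists>N. \<forall>n\<ge>N. C n = C N"
    and P: "\<And>n k. P (L n k)"
    and mono: "\<And>n n' k k'. n \<le> n' \<Longrightarrow> k \<le> k' \<Longrightarrow> L n k \<subseteq> L n' k'"
  shows "\<exists>M. \<forall>k\<ge>M. \<forall>n. L n k = L n M"
proof -
  obtain N where diag: "\<And>n. n \<ge> N \<Longrightarrow> L n n = L N N"
    using acc[of "\<lambda>n. L n n"] P mono[of n "Suc n" n "Suc n" for n] by auto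
  have "\<exists>K. \<forall>k\<ge>K. L n k = L n K" for n
    using acc[of "L n"] P mono[of n n k "Suc k" for k] by auto
  then obtain K where rows: "\<And>n k. k \<ge> K n \<Longrightarrow> L n k = L n (K n)"
    by metis
  define M where "M = max N (Max (K ` {..N}))"
  have "L n k = L n M" if "k \<ge> M" for k n
  proof (cases "n \<le> N")
    case True
    then have "K n \<le> M"
      unfolding M_def by (simp add: le_max_iff_disj)
    with \<open>k \<ge> M\<close> show ?thesis
      using rows[of n k] rows[of n M] by simp
  next
    case False
    have "L n k \<subseteq> L (max n k) (max n k)"
      by (intro mono) simp_all
    also have "\<dots> = L N N"
      using False by (intro diag) simp
    also have "\<dots> \<subseteq> L n M"
      using False by (intro mono) (simp_all add: M_def)
    finally show ?thesis
      using mono[of n n M k] \<open>k \<ge> M\<close> by blast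
  qed
  then show ?thesis by blast
qed

locale nonassoc_ore =
  fixes mul :: "'a::ab_group_add \<Rightarrow> 'a \<Rightarrow> 'a" and one :: 'a and \<sigma> \<delta> :: "'a \<Rightarrow> 'a"
  assumes ring: "nonassoc_ring_1 mul one"
    and additive_\<sigma>: "additive_map \<sigma>" and additive_\<delta>: "additive_map \<delta>"
begin

lemma mul_zero_left [simp]: "mul 0 x = 0"
  using ring unfolding nonassoc_ring_1_def by (metis add_cancel_right_right add_0)

lemma mul_zero_right [simp]: "mul x 0 = 0"
  using ring unfolding nonassoc_ring_1_def by (metis add_cancel_right_right add_0)

lemma mul_one_right [simp]: "mul x one = x"
  using ring unfolding nonassoc_ring_1_def by blast

lemma ore_pi_zero [simp]: "ore_pi \<sigma> \<delta> i m 0 = 0"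
  using additive_\<sigma> additive_\<delta> by (simp add: ore_pi_def word_comp_zero additive_map_zero)

lemma ore_mul_eq_sum:
  assumes "degree p \<le> A" "degree q \<le> B"
  shows "ore_mul mul \<sigma> \<delta> p q =
    (\<Sum>m\<le>A. \<Sum>n\<le>B. \<Sum>i\<le>m. monom (mul (coeff p m) (ore_pi \<sigma> \<delta> i m (coeff q n))) (i + n))"
proof -
  let ?t = "\<lambda>m n. \<Sum>i\<le>m. monom (mul (coeff p m) (ore_pi \<sigma> \<delta> i m (coeff q n))) (i + n)"
  have "(\<Sum>n\<le>degree q. ?t m n) = (\<Sum>n\<le>B. ?t m n)" for m
    using assms(2) by (intro sum.mono_neutral_left) (auto simp: coeff_eq_0)
  moreover have "(\<Sum>m\<le>degree p. \<Sum>n\<le>B. ?t m n) = (\<Sum>m\<le>A. \<Sum>n\<le>B. ?t m n)"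
    using assms(1) by (intro sum.mono_neutral_left) (auto simp: coeff_eq_0)
  ultimately show ?thesis
    unfolding ore_mul_def by simp
qed

lemma coeff_ore_mul:
  assumes "degree p \<le> A" "degree q \<le> B"
  shows "coeff (ore_mul mul \<sigma> \<delta> p q) k =
    (\<Sum>m\<le>A. \<Sum>n\<le>B. \<Sum>i\<le>m. if i + n = k then mul (coeff p m) (ore_pi \<sigma> \<delta> i m (coeff q n)) else 0)"
  by (simp add: ore_mul_eq_sum[OF assms] coeff_sum coeff_monom)

lemma degree_ore_mul_le:
  assumes "degree p \<le> A" "degree q \<le> B"
  shows "degree (ore_mul mul \<sigma> \<delta> p q) \<le> A + B"
  by (rule degree_le) (auto simp: coeff_ore_mul[OF assms] intro!: sum.neutral)

lemma coeff_ore_mul_top: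
  assumes "degree p \<le> A" "degree q \<le> B"
  shows "coeff (ore_mul mul \<sigma> \<delta> p q) (A + B) = mul (coeff p A) ((\<sigma> ^^ A) (coeff q B))"
  unfolding coeff_ore_mul[OF assms] sum_atMost_only_top_term by (simp add: ore_pi_diag)

lemma right_ideal_lead_coeffs:
  assumes "surj \<sigma>" and I: "right_ideal (ore_mul mul \<sigma> \<delta>) I"
  shows "right_ideal mul (lead_coeffs n I)"
  unfolding right_ideal_def
proof (intro conjI ballI allI)
  show "0 \<in> lead_coeffs n I"
    using right_ideal_zero[OF I] unfolding lead_coeffs_def by force
next
  fix x y assume "x \<in> lead_coeffs n I" "y \<in> lead_coeffs n I"
  then obtain f g where "f \<in> I" "degree f \<le> n" "x = coeff f n"
    and "g \<in> I" "degree g \<le> n" "y = coeff g n"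
    unfolding lead_coeffs_def by blast
  then show "x - y \<in> lead_coeffs n I"
    unfolding lead_coeffs_def
    by (auto intro!: exI[of _ "f - g"] right_ideal_diff[OF I] degree_diff_le)
next
  fix x s assume "x \<in> lead_coeffs n I"
  then obtain f where f: "f \<in> I" "degree f \<le> n" "x = coeff f n"
    unfolding lead_coeffs_def by blast
  obtain t where t: "s = (\<sigma> ^^ n) t"
    using surj_fn[OF \<open>surj \<sigma>\<close>] by (metis surjD)
  have "degree (ore_mul mul \<sigma> \<delta> f [:t:]) \<le> n"
    and "coeff (ore_mul mul \<sigma> \<delta> f [:t:]) n = mul x s"
    using degree_ore_mul_le[OF f(2), of "[:t:]" 0] coeff_ore_mul_top[OF f(2), of "[:t:]" 0] f t
    by simp_all
  with right_ideal_mul[OF I f(1), of "[:t:]"] show "mul x s \<in> lead_coeffs n I"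
    unfolding lead_coeffs_def by force
qed

lemma lead_coeffs_Suc_subset:
  assumes "\<sigma> one = one" and I: "right_ideal (ore_mul mul \<sigma> \<delta>) I"
  shows "lead_coeffs n I \<subseteq> lead_coeffs (Suc n) I"
proof
  fix x assume "x \<in> lead_coeffs n I"
  then obtain f where f: "f \<in> I" "degree f \<le> n" "x = coeff f n"
    unfolding lead_coeffs_def by blast
  have X: "degree (monom one 1) \<le> 1" "coeff (monom one 1) 1 = one"
    by (simp_all add: degree_monom_le)
  have "(\<sigma> ^^ n) one = one"
    using assms(1) by (induction n) simp_all
  then have "degree (ore_mul mul \<sigma> \<delta> f (monom one 1)) \<le> Suc n"
    and "coeff (ore_mul mul \<sigma> \<delta> f (monom one 1)) (Suc n) = x"
    using degree_ore_mul_le[OF f(2) X(1)] coeff_ore_mul_top[OF f(2) X(1)] X(2) f(3)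
    by simp_all
  with right_ideal_mul[OF I f(1), of "monom one 1"] show "x \<in> lead_coeffs (Suc n) I"
    unfolding lead_coeffs_def by force
qed

lemma lead_coeffs_subset:
  assumes "\<sigma> one = one" and J: "right_ideal (ore_mul mul \<sigma> \<delta>) J" and "I \<subseteq> J" "n \<le> n'"
  shows "lead_coeffs n I \<subseteq> lead_coeffs n' J"
proof -
  have "lead_coeffs n I \<subseteq> lead_coeffs n J"
    using lead_coeffs_mono[OF \<open>I \<subseteq> J\<close>] .
  also have "\<dots> \<subseteq> lead_coeffs n' J"
    using lift_Suc_mono_le[of "\<lambda>n. lead_coeffs n J"] lead_coeffs_Suc_subset[OF assms(1) J] \<open>n \<le> n'\<close>
    by blast
  finally show ?thesis .
qed

end

theorem theorem13:
  fixes mul :: "'a::ab_group_add \<Rightarrow> 'a \<Rightarrow> 'a" and one :: 'a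
    and \<sigma> \<delta> :: "'a \<Rightarrow> 'a"
  assumes "nonassoc_ring_1 mul one"
    and "additive_map \<sigma>" and "surj \<sigma>" and "\<sigma> one = one"
    and "additive_map \<delta>" and "\<delta> one = 0"
    and "right_noetherian mul"
  shows "right_noetherian (ore_mul mul \<sigma> \<delta>)"
  unfolding right_noetherian_def
proof (intro allI impI, elim conjE)
  interpret nonassoc_ore mul one \<sigma> \<delta>
    using assms by unfold_locales
  fix I :: "nat \<Rightarrow> 'a poly set"
  assume ideal: "\<forall>k. right_ideal (ore_mul mul \<sigma> \<delta>) (I k)" and chain: "\<forall>k. I k \<subseteq> I (Suc k)"
  have I_mono: "k \<le> k' \<Longrightarrow> I k \<subseteq> I k'" for k k'
    using lift_Suc_mono_le[of I] chain by blast
  define L where "L n k = lead_coeffs n (I k)" for n k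
  have L_ideal: "right_ideal mul (L n k)" for n k
    unfolding L_def using right_ideal_lead_coeffs[OF assms(3)] ideal by blast
  have L_mono: "L n k \<subseteq> L n' k'" if "n \<le> n'" "k \<le> k'" for n n' k k'
    unfolding L_def
    using lead_coeffs_subset[OF assms(4) ideal[rule_format] I_mono[OF that(2)] that(1)] .
  have "\<exists>M. \<forall>k\<ge>M. \<forall>n. L n k = L n M"
    by (rule doubly_monotone_stabilizes[where P = "right_ideal mul" and L = L, OF _ L_ideal L_mono],
        rule right_noetherianD[OF assms(7)])
  then obtain M where M: "\<And>k n. k \<ge> M \<Longrightarrow> L n k = L n M"
    by blast
  have "I M = I k" if "k \<ge> M" for k
  proof (rule right_ideal_eq_if_lead_coeffs_subset)
    show "lead_coeffs n (I k) \<subseteq> lead_coeffs n (I M)" for n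
      using M[OF that, of n] unfolding L_def by simp
  qed (use ideal I_mono that in auto)
  then show "\<exists>N. \<forall>n\<ge>N. I n = I N"
    by auto
qed

end
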